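(* Let $X$ be a real Hilbert space, let $A,B\colon X\rightrightarrows X$, let $\mu>\omega\ge0$, and let $\gamma\in\left]0,\frac{\mu-\omega}{2\mu\omega}\right[$ (with $\gamma\in\left]0,+\infty\right[$ when $\omega=0$). Suppose that either (a) $A$ is maximally $(-\omega)$-monotone and $B$ is maximally $\mu$-monotone, or (b) $A$ is maximally $\mu$-monotone and $B$ is maximally $(-\omega)$-monotone. Set $$T=\tfrac12\big(\mathrm{Id}+R_{\gamma B}R_{\gamma A}\big),\qquad\alpha=\frac{\mu-\omega}{2(\mu-\omega-\gamma\mu\omega)}.$$ Then $T$ is single-valued with full domain, $\alpha\in\left]0,1\right[$, and $T$ is $\alpha$-averaged.
   Context: For $\rho\in\mathbb{R}$, $A\colon X\rightrightarrows X$ is $\rho$-monotone if $\langle x-y,u-v\rangle\ge\rho\|x-y\|^2$ for all $(x,u),(y,v)\in\operatorname{gra}A$, and maximally $\rho$-monotone if no proper extension of its graph is $\rho$-monotone. $J_A=(\mathrm{Id}+A)^{-1}$, $R_A=2J_A-\mathrm{Id}$. For $\alpha\in\left]0,1\right[$, $T$ is $\alpha$-averaged if $T=(1-\alpha)\mathrm{Id}+\alpha N$ for some nonexpansive ($1$-Lipschitz) $N\colon X\to X$. *)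

theory Defs
  imports "HOL-Analysis.Analysis"
begin

(* Set-valued operators X \<rightrightarrows> X are modelled as 'a \<Rightarrow> 'a set; gra A = {(x,u). u \<in> A x}. *)

definition gra :: "('a \<Rightarrow> 'a set) \<Rightarrow> ('a \<times> 'a) set" where
  "gra A = {(x, u). u \<in> A x}"

definition rho_monotone :: "real \<Rightarrow> ('a::real_inner \<Rightarrow> 'a set) \<Rightarrow> bool" where
  "rho_monotone \<rho> A \<longleftrightarrow>
     (\<forall>(x, u)\<in>gra A. \<forall>(y, v)\<in>gra A. inner (x - y) (u - v) \<ge> \<rho> * (norm (x - y))\<^sup>2)"

definition max_rho_monotone :: "real \<Rightarrow> ('a::real_inner \<Rightarrow> 'a set) \<Rightarrow> bool" where
  "max_rho_monotone \<rho> A \<longleftrightarrow> rho_monotone \<rho> A \<and>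
     (\<forall>B. rho_monotone \<rho> B \<and> gra A \<subseteq> gra B \<longrightarrow> gra B = gra A)"

definition op_scale :: "real \<Rightarrow> ('a::real_vector \<Rightarrow> 'a set) \<Rightarrow> ('a \<Rightarrow> 'a set)" where
  "op_scale \<gamma> A = (\<lambda>x. (\<lambda>u. \<gamma> *\<^sub>R u) ` A x)"

(* resolvent J_A = (Id + A)^{-1}, as a set-valued operator *)
definition resolvent :: "('a::real_vector \<Rightarrow> 'a set) \<Rightarrow> ('a \<Rightarrow> 'a set)" where
  "resolvent A = (\<lambda>x. {y. x - y \<in> A y})"

definition reflected_resolvent :: "('a::real_vector \<Rightarrow> 'a set) \<Rightarrow> ('a \<Rightarrow> 'a set)" where
  "reflected_resolvent A = (\<lambda>x. (\<lambda>y. 2 *\<^sub>R y - x) ` resolvent A x)"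

definition op_comp :: "('a \<Rightarrow> 'a set) \<Rightarrow> ('a \<Rightarrow> 'a set) \<Rightarrow> ('a \<Rightarrow> 'a set)" where
  "op_comp S R = (\<lambda>x. \<Union>z\<in>R x. S z)"

definition DR_op :: "real \<Rightarrow> ('a::real_vector \<Rightarrow> 'a set) \<Rightarrow> ('a \<Rightarrow> 'a set) \<Rightarrow> ('a \<Rightarrow> 'a set)" where
  "DR_op \<gamma> A B = (\<lambda>x. (\<lambda>z. (1/2) *\<^sub>R (x + z)) `
      op_comp (reflected_resolvent (op_scale \<gamma> B)) (reflected_resolvent (op_scale \<gamma> A)) x)"

definition single_valued_full_domain :: "('a \<Rightarrow> 'a set) \<Rightarrow> bool" where
  "single_valued_full_domain T \<longleftrightarrow> (\<forall>x. \<exists>!y. y \<in> T x)"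

definition nonexpansive :: "('a::real_normed_vector \<Rightarrow> 'a) \<Rightarrow> bool" where
  "nonexpansive N \<longleftrightarrow> (\<forall>x y. norm (N x - N y) \<le> norm (x - y))"

definition averaged :: "real \<Rightarrow> ('a::real_normed_vector \<Rightarrow> 'a) \<Rightarrow> bool" where
  "averaged \<alpha> T \<longleftrightarrow> 0 < \<alpha> \<and> \<alpha> < 1 \<and>
     (\<exists>N. nonexpansive N \<and> T = (\<lambda>x. (1 - \<alpha>) *\<^sub>R x + \<alpha> *\<^sub>R N x))"

end

theory Submission
  imports Defs
begin

text \<open>
  A maximally \<open>\<rho>\<close>-monotone \<open>A\<close> with \<open>1 + \<rho> > 0\<close> has a single-valued resolvent with full domain.
  Uniqueness is immediate; existence is Minty's theorem. The condition \<open>\<langle>x - y, w - u - x\<rangle> \<ge> 0\<close>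
  says that \<open>x\<close> lies in the ball with diameter \<open>[y, w - u]\<close>, so one needs a common point of these
  balls over \<open>(y, u) \<in> gra A\<close>. Finitely many of them meet: over the convex hull of the centres, a
  minimiser of the largest excess \<open>dist\<^sup>2 - radius\<^sup>2\<close> is a convex combination of the active centres,
  where monotonicity makes the weighted excess non-positive. All of them meet because in a Hilbert
  space closed convex sets with the finite intersection property, one of them bounded, have a
  common point: nearly norm-minimal points of finite intersections form a Cauchy sequence, by the
  parallelogram law.

  The resolvents are firm: \<open>(1 + \<gamma>\<rho>)\<parallel>J x - J y\<parallel>\<^sup>2 \<le> \<langle>J x - J y, x - y\<rangle>\<close>. With \<open>a\<close>, \<open>c\<close> the
  differences of \<open>J\<^bsub>\<gamma>A\<^esub>\<close> and of \<open>J\<^bsub>\<gamma>B\<^esub>\<close> (at the reflected points) and \<open>s = \<rho>\<^sub>A + \<rho>\<^sub>B\<close>, the identity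
  \<open>s((1 + \<gamma>\<rho>\<^sub>A)\<parallel>a\<parallel>\<^sup>2 + (1 + \<gamma>\<rho>\<^sub>B)\<parallel>c\<parallel>\<^sup>2 - 2\<langle>a, c\<rangle>) = (s + \<gamma>\<rho>\<^sub>A\<rho>\<^sub>B)\<parallel>a - c\<parallel>\<^sup>2 + \<gamma>\<parallel>\<rho>\<^sub>A a + \<rho>\<^sub>B c\<parallel>\<^sup>2\<close>
  turns the two firmness inequalities into \<open>\<parallel>S x - S y\<parallel>\<^sup>2 \<le> 2\<alpha>\<langle>x - y, S x - S y\<rangle>\<close> for
  \<open>S = Id - T\<close>, i.e. \<open>Id - S/\<alpha>\<close> is nonexpansive. The theorem is the case \<open>{\<rho>\<^sub>A, \<rho>\<^sub>B} = {-\<omega>, \<mu>}\<close>.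
\<close>

lemma inner_eq_dist_midpoint:
  fixes x y z :: "'a::real_inner"
  shows "inner (x - y) (z - x) = (dist y z / 2)\<^sup>2 - (dist x (midpoint y z))\<^sup>2"
  unfolding dist_norm midpoint_def power2_norm_eq_inner power_divide
  by (simp add: inner_simps inner_commute field_simps)

lemma mem_cball_midpoint_iff:
  fixes x y z :: "'a::real_inner"
  shows "x \<in> cball (midpoint y z) (dist y z / 2) \<longleftrightarrow> 0 \<le> inner (x - y) (z - x)"
proof -
  have "x \<in> cball (midpoint y z) (dist y z / 2) \<longleftrightarrow> (dist x (midpoint y z))\<^sup>2 \<le> (dist y z / 2)\<^sup>2"
    by (simp add: dist_commute abs_le_square_iff[symmetric])
  then show ?thesis
    unfolding inner_eq_dist_midpoint by simp
qed

lemma dist_towards_nearest_less: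
  fixes x P b :: "'a::real_inner"
  assumes "convex K" "closed K" "P \<in> K" "b \<in> K" "\<And>z. z \<in> K \<Longrightarrow> dist x P \<le> dist x z"
    and "P \<noteq> x" "0 < t" "t \<le> 1"
  shows "(dist (x + t *\<^sub>R (P - x)) b)\<^sup>2 < (dist x b)\<^sup>2"
proof -
  have "inner (x - P) (b - P) \<le> 0"
    using any_closest_point_dot[OF assms(1-4)] assms(5) by blast
  then have "t * inner (b - P) (x - P) \<le> 0"
    using assms(7) by (simp add: inner_commute mult_nonneg_nonpos)
  moreover have "0 < (2 * t - t\<^sup>2) * (norm (P - x))\<^sup>2"
    using assms(6-8) by (intro mult_pos_pos) (auto simp: power2_eq_square)
  moreover have "(dist (x + t *\<^sub>R (P - x)) b)\<^sup>2
      = (dist x b)\<^sup>2 + 2 * t * inner (b - P) (x - P) - (2 * t - t\<^sup>2) * (norm (P - x))\<^sup>2"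
    unfolding dist_norm power2_norm_eq_inner
    by (simp add: inner_simps inner_commute algebra_simps power2_eq_square)
  ultimately show ?thesis
    by linarith
qed

lemma convex_near_min_norm_dist:
  fixes x y :: "'a::real_inner"
  assumes "convex K" "x \<in> K" "y \<in> K" "\<And>z. z \<in> K \<Longrightarrow> S - e \<le> (norm z)\<^sup>2"
    and "(norm x)\<^sup>2 \<le> S + e" "(norm y)\<^sup>2 \<le> S + e"
  shows "dist x y \<le> sqrt (8 * e)"
proof -
  have "midpoint x y \<in> K"
    using convexD[OF assms(1-3), of "1/2" "1/2"] by (simp add: midpoint_def scaleR_add_right)
  then have "S - e \<le> (norm (midpoint x y))\<^sup>2"
    by (rule assms(4))
  moreover have "(norm (x - y))\<^sup>2 = 2 * (norm x)\<^sup>2 + 2 * (norm y)\<^sup>2 - 4 * (norm (midpoint x y))\<^sup>2"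
    unfolding midpoint_def power2_norm_eq_inner by (simp add: inner_simps inner_commute algebra_simps)
  ultimately have "(norm (x - y))\<^sup>2 \<le> 8 * e"
    using assms(5,6) by linarith
  then show ?thesis
    by (simp add: dist_norm real_le_rsqrt)
qed

lemma inner_weighted_mean_le:
  fixes y u :: "'i \<Rightarrow> 'a::real_inner"
  assumes "finite J" and mono: "\<And>p q. p \<in> J \<Longrightarrow> q \<in> J \<Longrightarrow> 0 \<le> inner (y p - y q) (u p - u q)"
    and "\<And>p. p \<in> J \<Longrightarrow> 0 \<le> c p" and "sum c J = 1"
  shows "inner (\<Sum>p\<in>J. c p *\<^sub>R y p) (\<Sum>p\<in>J. c p *\<^sub>R u p) \<le> (\<Sum>p\<in>J. c p * inner (y p) (u p))"
    (is "inner ?y ?u \<le> ?S")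
proof -
  have "(\<Sum>p\<in>J. \<Sum>q\<in>J. c p * c q * inner (y p - y q) (u p - u q))
      = (\<Sum>p\<in>J. \<Sum>q\<in>J. c q * (c p * inner (y p) (u p)) + c p * (c q * inner (y q) (u q))
          - inner (c p *\<^sub>R y p) (c q *\<^sub>R u q) - inner (c q *\<^sub>R y q) (c p *\<^sub>R u p))"
    by (intro sum.cong refl) (simp add: inner_simps algebra_simps)
  also have "\<dots> = 2 * ?S - 2 * inner ?y ?u"
  proof -
    have "(\<Sum>p\<in>J. \<Sum>q\<in>J. c q * (c p * inner (y p) (u q))) = (\<Sum>p\<in>J. c p * (\<Sum>q\<in>J. c q * inner (y q) (u p)))"
      by (subst sum.swap) (simp add: sum_distrib_left)
    then show ?thesis
      by (simp add: sum.distrib sum_subtractf inner_sum_left inner_sum_right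
          sum_distrib_left[symmetric] sum_distrib_right[symmetric] assms(4))
  qed
  finally have "(\<Sum>p\<in>J. \<Sum>q\<in>J. c p * c q * inner (y p - y q) (u p - u q)) = 2 * ?S - 2 * inner ?y ?u" .
  moreover have "0 \<le> (\<Sum>p\<in>J. \<Sum>q\<in>J. c p * c q * inner (y p - y q) (u p - u q))"
    using assms by (intro sum_nonneg mult_nonneg_nonneg) auto
  ultimately show ?thesis by linarith
qed

lemma weighted_midpoint_inner_nonneg:
  fixes y u :: "'i \<Rightarrow> 'a::real_inner" and w :: 'a
  assumes "finite J" and mono: "\<And>p q. p \<in> J \<Longrightarrow> q \<in> J \<Longrightarrow> 0 \<le> inner (y p - y q) (u p - u q)"
    and c: "\<And>p. p \<in> J \<Longrightarrow> 0 \<le> c p" "sum c J = 1"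
  defines "x \<equiv> \<Sum>q\<in>J. c q *\<^sub>R midpoint (y q) (w - u q)"
  shows "0 \<le> (\<Sum>p\<in>J. c p * inner (x - y p) (w - u p - x))"
proof -
  define y' where "y' = (\<Sum>p\<in>J. c p *\<^sub>R y p)"
  define u' where "u' = (\<Sum>p\<in>J. c p *\<^sub>R u p)"
  have "x = inverse 2 *\<^sub>R (\<Sum>q\<in>J. c q *\<^sub>R (y q + (w - u q)))"
    unfolding x_def midpoint_def by (simp add: scaleR_sum_right)
  also have "(\<Sum>q\<in>J. c q *\<^sub>R (y q + (w - u q))) = y' + (w - u')"
    using c(2) unfolding y'_def u'_def
    by (simp add: scaleR_add_right scaleR_diff_right sum.distrib sum_subtractf flip: scaleR_sum_left)
  finally have "2 *\<^sub>R x = y' + (w - u')"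
    by simp
  then have "w - u' - x = x - y'"
    by (simp add: algebra_simps scaleR_2)
  have "(\<Sum>p\<in>J. c p * inner (x - y p) (w - u p - x))
      = (\<Sum>p\<in>J. c p * inner x (w - x) - inner x (c p *\<^sub>R u p) - inner (c p *\<^sub>R y p) (w - x)
          + c p * inner (y p) (u p))"
    by (intro sum.cong refl) (simp add: inner_simps algebra_simps)
  also have "\<dots> = inner x (w - x) - inner x u' - inner y' (w - x) + (\<Sum>p\<in>J. c p * inner (y p) (u p))"
    using c(2) unfolding y'_def u'_def
    by (simp add: sum.distrib sum_subtractf inner_sum_left inner_sum_right sum_distrib_right[symmetric])
  also have "\<dots> = inner (x - y') (w - u' - x) + ((\<Sum>p\<in>J. c p * inner (y p) (u p)) - inner y' u')"
    by (simp add: inner_simps inner_commute)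
  also have "\<dots> = (norm (x - y'))\<^sup>2 + ((\<Sum>p\<in>J. c p * inner (y p) (u p)) - inner y' u')"
    using \<open>w - u' - x = x - y'\<close> by (simp add: power2_norm_eq_inner)
  finally show ?thesis
    using inner_weighted_mean_le[OF assms(1) mono c] unfolding y'_def u'_def by simp
qed

lemma continuous_on_Max_image:
  fixes h :: "'i \<Rightarrow> 'a::topological_space \<Rightarrow> 'b::linorder_topology"
  assumes "finite F" "F \<noteq> {}" "\<And>p. p \<in> F \<Longrightarrow> continuous_on S (h p)"
  shows "continuous_on S (\<lambda>x. Max ((\<lambda>p. h p x) ` F))"
  using assms
proof (induction F rule: finite_ne_induct)
  case (insert q F)
  then show ?case
    by (simp add: continuous_on_max)
qed simp

lemma convex_hull_image_weights:
  assumes "finite J" "x \<in> convex hull (a ` J)"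
  obtains c where "\<forall>p\<in>J. 0 \<le> c p" "sum c J = 1" "x = (\<Sum>p\<in>J. c p *\<^sub>R a p)"
proof -
  have "a ` J = (\<Union>p\<in>J. {a p})" by auto
  with assms show ?thesis
    using that by (auto simp: convex_hull_finite_union[OF assms(1)])
qed

lemma Cauchy_if_dist_le_add:
  fixes X :: "nat \<Rightarrow> 'a::metric_space"
  assumes "\<And>m n. dist (X m) (X n) \<le> \<epsilon> m + \<epsilon> n" and "\<epsilon> \<longlonglongrightarrow> 0"
  shows "Cauchy X"
proof (rule metric_CauchyI)
  fix d :: real assume "0 < d"
  then have "\<forall>\<^sub>F n in sequentially. \<epsilon> n < d / 2"
    using assms(2) \<open>0 < d\<close> by (intro order_tendstoD) auto
  then obtain N where N: "\<And>n. N \<le> n \<Longrightarrow> \<epsilon> n < d / 2"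
    unfolding eventually_sequentially by blast
  show "\<exists>N. \<forall>m\<ge>N. \<forall>n\<ge>N. dist (X m) (X n) < d"
  proof (intro exI allI impI)
    fix m n assume "N \<le> m" "N \<le> n"
    then show "dist (X m) (X n) < d"
      using N[of m] N[of n] assms(1)[of m n] by linarith
  qed
qed

section \<open>Common points of balls in Hilbert space\<close>

lemma exists_small_step_below:
  fixes f :: "'i \<Rightarrow> 'a::real_normed_vector \<Rightarrow> real"
  assumes "finite F" "\<And>p. p \<in> F \<Longrightarrow> f p x < m" "\<And>p. p \<in> F \<Longrightarrow> isCont (f p) x"
  shows "\<exists>t. 0 < t \<and> t \<le> 1 \<and> (\<forall>p\<in>F. f p (x + t *\<^sub>R d) < m)"
proof -
  have "((\<lambda>t::real. x + t *\<^sub>R d) \<longlongrightarrow> x) (at_right 0)"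
    by (auto intro!: tendsto_eq_intros)
  then have "\<forall>\<^sub>F t in at_right 0. \<forall>p\<in>F. f p (x + t *\<^sub>R d) < m"
    using assms by (intro eventually_ball_finite ballI order_tendstoD(2)[OF isCont_tendsto_compose]) auto
  moreover have "\<forall>\<^sub>F t in at_right (0::real). 0 < t \<and> t \<le> 1"
    unfolding eventually_at_right_field by (intro exI[of _ 1]) auto
  ultimately have "\<forall>\<^sub>F t in at_right 0. 0 < t \<and> t \<le> 1 \<and> (\<forall>p\<in>F. f p (x + t *\<^sub>R d) < m)"
    by (simp add: eventually_conj_iff)
  then show ?thesis
    using eventually_happens' trivial_limit_at_right_real unfolding trivial_limit_def by blast
qed

lemma descent_towards_convex_hull:
  fixes a :: "'i \<Rightarrow> 'a::real_inner"
  assumes "finite J" "J \<noteq> {}" "x \<notin> convex hull (a ` J)"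
  obtains P where "P \<in> convex hull (a ` J)"
    "\<And>p t. p \<in> J \<Longrightarrow> 0 < t \<Longrightarrow> t \<le> 1 \<Longrightarrow> (dist (x + t *\<^sub>R (P - x)) (a p))\<^sup>2 < (dist x (a p))\<^sup>2"
proof -
  define K where "K = convex hull (a ` J)"
  have K: "compact K" "K \<noteq> {}" "convex K"
    unfolding K_def using assms(1,2) by (auto simp: finite_imp_compact_convex_hull)
  obtain P where P: "P \<in> K" "\<And>z. z \<in> K \<Longrightarrow> dist x P \<le> dist x z"
    using continuous_attains_inf[OF K(1,2) continuous_on_dist[OF continuous_on_const[of _ x] continuous_on_id]]
    by auto
  have "P \<noteq> x"
    using P(1) assms(3) unfolding K_def by auto
  show ?thesis
  proof (rule that)
    show "P \<in> convex hull (a ` J)"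
      using P(1) unfolding K_def .
    fix p and t :: real assume "p \<in> J" "0 < t" "t \<le> 1"
    moreover have "a p \<in> K"
      unfolding K_def using \<open>p \<in> J\<close> by (simp add: hull_inc)
    ultimately show "(dist (x + t *\<^sub>R (P - x)) (a p))\<^sup>2 < (dist x (a p))\<^sup>2"
      using dist_towards_nearest_less[OF K(3) compact_imp_closed[OF K(1)] P(1) _ P(2) \<open>P \<noteq> x\<close>] by blast
  qed
qed

lemma Max_dist_argmin_in_hull_active:
  fixes a :: "'i \<Rightarrow> 'a::real_inner" and s :: "'i \<Rightarrow> real"
  defines "f \<equiv> \<lambda>p z. (dist z (a p))\<^sup>2 - s p"
  assumes F: "finite F" "F \<noteq> {}" and C: "convex C" "a ` F \<subseteq> C" and x: "x \<in> C"
    and min: "\<And>z. z \<in> C \<Longrightarrow> Max ((\<lambda>p. f p x) ` F) \<le> Max ((\<lambda>p. f p z) ` F)"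
  shows "x \<in> convex hull (a ` {p\<in>F. f p x = Max ((\<lambda>p. f p x) ` F)})"
proof (rule ccontr)
  define m where "m = Max ((\<lambda>p. f p x) ` F)"
  define J where "J = {p\<in>F. f p x = m}"
  assume "x \<notin> convex hull (a ` {p\<in>F. f p x = Max ((\<lambda>p. f p x) ` F)})"
  then have "x \<notin> convex hull (a ` J)"
    unfolding J_def m_def .
  moreover have "m \<in> (\<lambda>p. f p x) ` F"
    unfolding m_def using F by (intro Max_in) auto
  then have "finite J" "J \<noteq> {}"
    using F unfolding J_def by auto
  ultimately obtain P where P: "P \<in> convex hull (a ` J)"
    and descent: "\<And>p t. p \<in> J \<Longrightarrow> 0 < t \<Longrightarrow> t \<le> 1 \<Longrightarrow> (dist (x + t *\<^sub>R (P - x)) (a p))\<^sup>2 < (dist x (a p))\<^sup>2"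
    using descent_towards_convex_hull by metis
  have active: "f p (x + t *\<^sub>R (P - x)) < m" if "p \<in> J" "0 < t" "t \<le> 1" for p t
    using descent[OF that] that(1) unfolding J_def f_def by simp
  have "f p x \<le> m" if "p \<in> F" for p
    unfolding m_def using F that by (intro Max_ge) auto
  then have "f p x < m" if "p \<in> F - J" for p
    using that unfolding J_def by (auto intro: order.not_eq_order_implies_strict)
  moreover have "isCont (f p) x" for p
    unfolding f_def by (intro continuous_intros)
  ultimately obtain t where t: "0 < t" "t \<le> 1" "\<forall>p\<in>F - J. f p (x + t *\<^sub>R (P - x)) < m"
    using exists_small_step_below[of "F - J" f x m "P - x"] F by auto
  then have "Max ((\<lambda>p. f p (x + t *\<^sub>R (P - x))) ` F) < m"
    using F active[OF _ t(1,2)] by (auto simp: Max_less_iff)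
  moreover have "x + t *\<^sub>R (P - x) \<in> C"
  proof -
    have "convex hull (a ` J) \<subseteq> C"
      unfolding J_def using C by (intro hull_minimal) auto
    then show ?thesis
      using convexD[OF C(1) x, of P "1 - t" t] P t(1,2) by (auto simp: algebra_simps)
  qed
  ultimately show False
    using min unfolding m_def by (meson not_le)
qed

lemma finite_cball_Inter_nonempty:
  fixes a :: "'i \<Rightarrow> 'a::real_inner"
  assumes F: "finite F" and r: "\<And>p. p \<in> F \<Longrightarrow> 0 \<le> r p"
    and weights: "\<And>J c. J \<subseteq> F \<Longrightarrow> \<forall>p\<in>J. 0 \<le> c p \<Longrightarrow> sum c J = 1 \<Longrightarrow>
        (\<Sum>p\<in>J. c p * ((dist (\<Sum>q\<in>J. c q *\<^sub>R a q) (a p))\<^sup>2 - (r p)\<^sup>2)) \<le> 0"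
  shows "(\<Inter>p\<in>F. cball (a p) (r p)) \<noteq> {}"
proof (cases "F = {}")
  case False
  define f where "f p z = (dist z (a p))\<^sup>2 - (r p)\<^sup>2" for p z
  define G where "G z = Max ((\<lambda>p. f p z) ` F)" for z
  define C where "C = convex hull (a ` F)"
  have "compact C" "C \<noteq> {}"
    unfolding C_def using F False by (auto simp: finite_imp_compact_convex_hull)
  moreover have "continuous_on C G"
    unfolding G_def f_def using F False by (intro continuous_on_Max_image continuous_intros)
  ultimately obtain x where x: "x \<in> C" "\<And>z. z \<in> C \<Longrightarrow> G x \<le> G z"
    using continuous_attains_inf by metis
  define J where "J = {p\<in>F. f p x = G x}"
  have "x \<in> convex hull (a ` J)"
    unfolding J_def G_def f_def
    by (rule Max_dist_argmin_in_hull_active[OF F False _ _ x(1)])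
       (use x(2) in \<open>auto simp: C_def G_def f_def hull_subset\<close>)
  then obtain c where c: "\<forall>p\<in>J. 0 \<le> c p" "sum c J = 1" "x = (\<Sum>p\<in>J. c p *\<^sub>R a p)"
    using convex_hull_image_weights[of J] F unfolding J_def by auto
  have "(\<Sum>p\<in>J. c p * f p (\<Sum>q\<in>J. c q *\<^sub>R a q)) \<le> 0"
    unfolding f_def by (rule weights) (use c(1,2) in \<open>auto simp: J_def\<close>)
  moreover have "(\<Sum>p\<in>J. c p * f p x) = G x"
    using c(2) by (simp add: J_def sum_distrib_right[symmetric])
  ultimately have "G x \<le> 0"
    by (simp only: c(3)[symmetric])
  moreover have "f p x \<le> G x" if "p \<in> F" for p
    unfolding G_def using F that by (intro Max_ge) auto
  ultimately have f_nonpos: "f p x \<le> 0" if "p \<in> F" for p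
    using that by (meson order_trans)
  have "x \<in> cball (a p) (r p)" if "p \<in> F" for p
  proof -
    have "(dist (a p) x)\<^sup>2 \<le> (r p)\<^sup>2"
      using f_nonpos[OF that] unfolding f_def by (simp add: dist_commute)
    then have "dist (a p) x \<le> r p"
      using r[OF that] by (rule power2_le_imp_le)
    then show ?thesis
      by simp
  qed
  then show ?thesis by blast
qed simp

lemma common_closure_point_of_shrinking_sets:
  fixes T :: "nat \<Rightarrow> 'a::{real_normed_vector,complete_space} set"
  assumes meets: "\<And>K m n. K \<in> \<K> \<Longrightarrow> \<exists>z\<in>K. z \<in> T m \<and> z \<in> T n" and "K\<^sub>0 \<in> \<K>"
    and diam: "\<And>n x y. x \<in> T n \<Longrightarrow> y \<in> T n \<Longrightarrow> dist x y \<le> \<delta> n" and "\<delta> \<longlonglongrightarrow> 0"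
  shows "\<exists>l. \<forall>K\<in>\<K>. l \<in> closure K"
proof -
  obtain x where x: "\<And>n. x n \<in> T n"
    using meets[OF \<open>K\<^sub>0 \<in> \<K>\<close>] by metis
  have "Cauchy x"
  proof (rule Cauchy_if_dist_le_add[OF _ \<open>\<delta> \<longlonglongrightarrow> 0\<close>])
    fix m n
    obtain z where "z \<in> T m" "z \<in> T n"
      using meets[OF \<open>K\<^sub>0 \<in> \<K>\<close>] by blast
    then show "dist (x m) (x n) \<le> \<delta> m + \<delta> n"
      using diam[OF x \<open>z \<in> T m\<close>] diam[OF x \<open>z \<in> T n\<close>] dist_triangle2[of "x m" "x n" z]
      by linarith
  qed
  then obtain l where l: "x \<longlonglongrightarrow> l"
    using Cauchy_convergent_iff convergent_def by blast
  have "l \<in> closure K" if K: "K \<in> \<K>" for K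
  proof -
    obtain y where y: "\<And>n. y n \<in> K \<and> y n \<in> T n"
      using meets[OF K] by metis
    have "(\<lambda>n. dist (x n) (y n)) \<longlonglongrightarrow> 0"
      using diam[OF x] y by (intro tendsto_sandwich[OF _ _ tendsto_const \<open>\<delta> \<longlonglongrightarrow> 0\<close>]) auto
    then have "(\<lambda>n. x n - y n) \<longlonglongrightarrow> 0"
      unfolding dist_norm by (rule tendsto_norm_zero_cancel)
    then have "y \<longlonglongrightarrow> l"
      using l by (rule Lim_transform2[rotated])
    then show ?thesis
      using y by (auto simp: closure_sequential)
  qed
  then show ?thesis by blast
qed

definition min_norm_sq :: "'a::real_normed_vector set \<Rightarrow> real" where
  "min_norm_sq K = Inf ((\<lambda>z. (norm z)\<^sup>2) ` K)"

lemma min_norm_sq_le: "z \<in> K \<Longrightarrow> min_norm_sq K \<le> (norm z)\<^sup>2"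
  unfolding min_norm_sq_def by (intro cInf_lower bdd_belowI[of _ 0]) auto

lemma min_norm_sq_less:
  assumes "K \<noteq> {}" "0 < e"
  shows "\<exists>z\<in>K. (norm z)\<^sup>2 < min_norm_sq K + e"
  using assms cInf_less_iff[of "(\<lambda>z. (norm z)\<^sup>2) ` K" "min_norm_sq K + e"]
  unfolding min_norm_sq_def by (force intro: bdd_belowI[of _ 0])

lemma directed_bdd_above_min_norm_sq:
  assumes nonempty: "\<And>K. K \<in> \<K> \<Longrightarrow> K \<noteq> {}"
    and directed: "\<And>K L. K \<in> \<K> \<Longrightarrow> L \<in> \<K> \<Longrightarrow> \<exists>M\<in>\<K>. M \<subseteq> K \<inter> L"
    and "K\<^sub>0 \<in> \<K>" "bounded K\<^sub>0"
  shows "bdd_above (min_norm_sq ` \<K>)"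
proof -
  obtain c where c: "\<And>z. z \<in> K\<^sub>0 \<Longrightarrow> norm z \<le> c"
    using \<open>bounded K\<^sub>0\<close> unfolding bounded_iff by blast
  have "min_norm_sq K \<le> c\<^sup>2" if K: "K \<in> \<K>" for K
  proof -
    obtain M where "M \<in> \<K>" "M \<subseteq> K \<inter> K\<^sub>0"
      using directed[OF K \<open>K\<^sub>0 \<in> \<K>\<close>] by blast
    moreover obtain z where "z \<in> M"
      using nonempty \<open>M \<in> \<K>\<close> by blast
    ultimately have "z \<in> K" "norm z \<le> c"
      using c by auto
    then show ?thesis
      using min_norm_sq_le[of z K] power_mono[of "norm z" c 2] by simp
  qed
  then show ?thesis
    by (intro bdd_aboveI[of _ "c\<^sup>2"]) auto
qed

lemma directed_convex_common_closure_point: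
  fixes \<K> :: "'a::{real_inner,complete_space} set set"
  assumes convex: "\<And>K. K \<in> \<K> \<Longrightarrow> convex K" and nonempty: "\<And>K. K \<in> \<K> \<Longrightarrow> K \<noteq> {}"
    and directed: "\<And>K L. K \<in> \<K> \<Longrightarrow> L \<in> \<K> \<Longrightarrow> \<exists>M\<in>\<K>. M \<subseteq> K \<inter> L"
    and "K\<^sub>0 \<in> \<K>" "bounded K\<^sub>0"
  shows "\<exists>l. \<forall>K\<in>\<K>. l \<in> closure K"
proof -
  note bdd = directed_bdd_above_min_norm_sq[OF nonempty directed assms(4,5)]
  define S where "S = (SUP K\<in>\<K>. min_norm_sq K)"
  define e where "e n = inverse (real (Suc n))" for n
  have "\<exists>K\<in>\<K>. S - e n < min_norm_sq K" for n
    using less_cSUP_iff[OF _ bdd, of "S - e n"] \<open>K\<^sub>0 \<in> \<K>\<close> unfolding S_def[symmetric] e_def by auto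
  then obtain Kn where Kn: "\<And>n. Kn n \<in> \<K>" "\<And>n. S - e n < min_norm_sq (Kn n)"
    by metis
  define T where "T n = {z \<in> Kn n. (norm z)\<^sup>2 < S + e n}" for n
  show ?thesis
  proof (rule common_closure_point_of_shrinking_sets[OF _ \<open>K\<^sub>0 \<in> \<K>\<close>])
    show "\<exists>z\<in>K. z \<in> T m \<and> z \<in> T n" if K: "K \<in> \<K>" for K m n
    proof -
      obtain L where "L \<in> \<K>" "L \<subseteq> Kn m \<inter> Kn n" using directed Kn(1) by blast
      then obtain M where "M \<in> \<K>" "M \<subseteq> K \<inter> Kn m \<inter> Kn n" using directed K by blast
      moreover obtain z where "z \<in> M" "(norm z)\<^sup>2 < min_norm_sq M + min (e m) (e n)"
        using min_norm_sq_less[OF nonempty[OF \<open>M \<in> \<K>\<close>], of "min (e m) (e n)"] by (auto simp: e_def)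
      moreover have "min_norm_sq M \<le> S"
        unfolding S_def using \<open>M \<in> \<K>\<close> bdd by (rule cSUP_upper)
      ultimately show ?thesis
        unfolding T_def by auto
    qed
    show "dist x y \<le> sqrt (8 * e n)" if "x \<in> T n" "y \<in> T n" for x y n
    proof -
      have "S - e n \<le> (norm z)\<^sup>2" if "z \<in> Kn n" for z
        using Kn(2)[of n] min_norm_sq_le[OF that] by linarith
      then show ?thesis
        using that unfolding T_def by (intro convex_near_min_norm_dist[OF convex[OF Kn(1)]]) auto
    qed
    have "(\<lambda>n. sqrt (8 * e n)) \<longlonglongrightarrow> sqrt (8 * 0)"
      unfolding e_def by (intro tendsto_intros LIMSEQ_inverse_real_of_nat)
    then show "(\<lambda>n. sqrt (8 * e n)) \<longlonglongrightarrow> 0"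
      by simp
  qed
qed

lemma closed_convex_Inter_nonempty:
  fixes C :: "'i \<Rightarrow> 'a::{real_inner,complete_space} set"
  assumes "\<And>i. i \<in> I \<Longrightarrow> closed (C i)" "\<And>i. i \<in> I \<Longrightarrow> convex (C i)" "i\<^sub>0 \<in> I" "bounded (C i\<^sub>0)"
    and finite_Inter: "\<And>F. finite F \<Longrightarrow> F \<subseteq> I \<Longrightarrow> (\<Inter>i\<in>F. C i) \<noteq> {}"
  shows "(\<Inter>i\<in>I. C i) \<noteq> {}"
proof -
  define \<K> where "\<K> = (\<lambda>F. \<Inter>i\<in>F. C i) ` {F. finite F \<and> F \<subseteq> I}"
  have "\<exists>l. \<forall>K\<in>\<K>. l \<in> closure K"
  proof (rule directed_convex_common_closure_point)
    show "\<exists>M\<in>\<K>. M \<subseteq> K \<inter> L" if "K \<in> \<K>" "L \<in> \<K>" for K L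
    proof -
      from \<open>K \<in> \<K>\<close> obtain F where "K = (\<Inter>i\<in>F. C i)" "F \<in> {F. finite F \<and> F \<subseteq> I}"
        unfolding \<K>_def by (rule imageE)
      moreover from \<open>L \<in> \<K>\<close> obtain G where "L = (\<Inter>i\<in>G. C i)" "G \<in> {F. finite F \<and> F \<subseteq> I}"
        unfolding \<K>_def by (rule imageE)
      ultimately have "(\<Inter>i\<in>F \<union> G. C i) \<in> \<K>" "(\<Inter>i\<in>F \<union> G. C i) \<subseteq> K \<inter> L"
        unfolding \<K>_def by auto
      then show ?thesis by blast
    qed
    show "C i\<^sub>0 \<in> \<K>"
      unfolding \<K>_def using assms(3) by (intro image_eqI[of _ _ "{i\<^sub>0}"]) auto
    show "convex K" if "K \<in> \<K>" for K
      using that assms(2) unfolding \<K>_def by (auto intro!: convex_INT)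
    show "K \<noteq> {}" if "K \<in> \<K>" for K
      using that finite_Inter unfolding \<K>_def by auto
  qed (use assms(4) in simp)
  then obtain l where l: "\<forall>K\<in>\<K>. l \<in> closure K"
    by blast
  have "l \<in> C i" if "i \<in> I" for i
  proof -
    have "C i \<in> \<K>"
      unfolding \<K>_def using that by (intro image_eqI[of _ _ "{i}"]) auto
    then have "l \<in> closure (C i)"
      using l by blast
    then show ?thesis
      using assms(1)[OF that] by (simp add: closure_closed)
  qed
  then show ?thesis by blast
qed

section \<open>Maximally \<open>\<rho>\<close>-monotone operators and their resolvents\<close>

lemma rho_monotoneD:
  assumes "rho_monotone \<rho> A" "u \<in> A x" "v \<in> A y"
  shows "\<rho> * (norm (x - y))\<^sup>2 \<le> inner (x - y) (u - v)"
  using assms unfolding rho_monotone_def gra_def by fastforce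

lemma max_rho_monotone_iff:
  "max_rho_monotone \<rho> A \<longleftrightarrow> rho_monotone \<rho> A \<and>
     (\<forall>x u. (\<forall>y. \<forall>v\<in>A y. \<rho> * (norm (x - y))\<^sup>2 \<le> inner (x - y) (u - v)) \<longrightarrow> u \<in> A x)"
proof
  assume max: "max_rho_monotone \<rho> A"
  then have mono: "rho_monotone \<rho> A"
    unfolding max_rho_monotone_def by simp
  have "u \<in> A x" if rel: "\<forall>y. \<forall>v\<in>A y. \<rho> * (norm (x - y))\<^sup>2 \<le> inner (x - y) (u - v)" for x u
  proof -
    define B where "B = A(x := insert u (A x))"
    have gra_B: "gra B = insert (x, u) (gra A)"
      unfolding B_def gra_def by (auto split: if_splits)
    have "rho_monotone \<rho> B"
      unfolding rho_monotone_def gra_B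
    proof (intro ballI, clarify)
      fix x1 u1 x2 u2
      assume "(x1, u1) \<in> insert (x, u) (gra A)" "(x2, u2) \<in> insert (x, u) (gra A)"
      moreover have "\<rho> * (norm (y - x))\<^sup>2 \<le> inner (y - x) (v - u)" if "v \<in> A y" for y v
        using rel that by (metis inner_minus_left inner_minus_right minus_diff_eq norm_minus_commute)
      ultimately show "\<rho> * (norm (x1 - x2))\<^sup>2 \<le> inner (x1 - x2) (u1 - u2)"
        using rel rho_monotoneD[OF mono] by (auto simp: gra_def)
    qed
    then have "gra B = gra A"
      using max gra_B unfolding max_rho_monotone_def by blast
    then show ?thesis
      using gra_B by (auto simp: gra_def)
  qed
  with mono show "rho_monotone \<rho> A \<and>
     (\<forall>x u. (\<forall>y. \<forall>v\<in>A y. \<rho> * (norm (x - y))\<^sup>2 \<le> inner (x - y) (u - v)) \<longrightarrow> u \<in> A x)"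
    by blast
next
  assume "rho_monotone \<rho> A \<and>
     (\<forall>x u. (\<forall>y. \<forall>v\<in>A y. \<rho> * (norm (x - y))\<^sup>2 \<le> inner (x - y) (u - v)) \<longrightarrow> u \<in> A x)"
  then show "max_rho_monotone \<rho> A"
    unfolding max_rho_monotone_def by (fastforce simp: gra_def dest: rho_monotoneD)
qed

lemma rho_monotone_op_scale:
  assumes "rho_monotone \<rho> A" "0 \<le> \<gamma>"
  shows "rho_monotone (\<gamma> * \<rho>) (op_scale \<gamma> A)"
  unfolding rho_monotone_def gra_def op_scale_def
proof (clarsimp)
  fix x y u v assume "u \<in> A x" "v \<in> A y"
  then have "\<gamma> * (\<rho> * (norm (x - y))\<^sup>2) \<le> \<gamma> * inner (x - y) (u - v)"
    using assms by (intro mult_left_mono rho_monotoneD) auto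
  then show "\<gamma> * \<rho> * (norm (x - y))\<^sup>2 \<le> inner (x - y) (\<gamma> *\<^sub>R u - \<gamma> *\<^sub>R v)"
    by (simp add: inner_diff_right algebra_simps)
qed

lemma max_rho_monotone_op_scale:
  assumes "max_rho_monotone \<rho> A" "0 < \<gamma>"
  shows "max_rho_monotone (\<gamma> * \<rho>) (op_scale \<gamma> A)"
  unfolding max_rho_monotone_iff
proof (intro conjI allI impI)
  show "rho_monotone (\<gamma> * \<rho>) (op_scale \<gamma> A)"
    using assms by (simp add: max_rho_monotone_def rho_monotone_op_scale)
  fix x u
  assume rel: "\<forall>y. \<forall>v\<in>op_scale \<gamma> A y. \<gamma> * \<rho> * (norm (x - y))\<^sup>2 \<le> inner (x - y) (u - v)"
  have "\<rho> * (norm (x - y))\<^sup>2 \<le> inner (x - y) (u /\<^sub>R \<gamma> - v)" if "v \<in> A y" for y v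
  proof -
    have "\<gamma> * \<rho> * (norm (x - y))\<^sup>2 \<le> inner (x - y) (u - \<gamma> *\<^sub>R v)"
      using rel that by (auto simp: op_scale_def)
    also have "\<dots> = \<gamma> * inner (x - y) (u /\<^sub>R \<gamma> - v)"
      using \<open>0 < \<gamma>\<close> by (simp add: inner_diff_right right_diff_distrib)
    finally show ?thesis
      using \<open>0 < \<gamma>\<close> by (simp add: mult.assoc)
  qed
  then have "u /\<^sub>R \<gamma> \<in> A x"
    using assms(1) unfolding max_rho_monotone_iff by blast
  then show "u \<in> op_scale \<gamma> A x"
    unfolding op_scale_def using \<open>0 < \<gamma>\<close> by (force intro: image_eqI[of _ _ "u /\<^sub>R \<gamma>"])
qed

lemma monotone_minty:
  fixes A :: "'a::{real_inner,complete_space} \<Rightarrow> 'a set"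
  assumes "rho_monotone 0 A"
  shows "\<exists>x. \<forall>y. \<forall>v\<in>A y. 0 \<le> inner (x - y) (w - v - x)"
proof (cases "gra A = {}")
  case False
  then obtain p\<^sub>0 where "p\<^sub>0 \<in> gra A" by blast
  define a where "a p = midpoint (fst p) (w - snd p)" for p
  define r where "r p = dist (fst p) (w - snd p) / 2" for p
  have cball_iff: "x \<in> cball (a p) (r p) \<longleftrightarrow> 0 \<le> inner (x - fst p) (w - snd p - x)" for x p
    unfolding a_def r_def by (rule mem_cball_midpoint_iff)
  have mono: "0 \<le> inner (fst p - fst q) (snd p - snd q)" if "p \<in> gra A" "q \<in> gra A" for p q
    using rho_monotoneD[OF assms, of "snd p" "fst p" "snd q" "fst q"] that by (auto simp: gra_def)
  have "(\<Inter>p\<in>gra A. cball (a p) (r p)) \<noteq> {}"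
  proof (rule closed_convex_Inter_nonempty[OF _ _ \<open>p\<^sub>0 \<in> gra A\<close>])
    fix F assume F: "finite F" "F \<subseteq> gra A"
    show "(\<Inter>p\<in>F. cball (a p) (r p)) \<noteq> {}"
    proof (rule finite_cball_Inter_nonempty[OF F(1)])
      fix J and c :: "'a \<times> 'a \<Rightarrow> real" assume J: "J \<subseteq> F" "\<forall>p\<in>J. 0 \<le> c p" "sum c J = 1"
      define x where "x = (\<Sum>q\<in>J. c q *\<^sub>R a q)"
      have "0 \<le> inner (fst p - fst q) (snd p - snd q)" if "p \<in> J" "q \<in> J" for p q
        using mono F J that by blast
      then have "0 \<le> (\<Sum>p\<in>J. c p * inner (x - fst p) (w - snd p - x))"
        unfolding x_def a_def
        by (rule weighted_midpoint_inner_nonneg[rotated]) (use F J finite_subset in auto)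
      moreover have "(\<Sum>p\<in>J. c p * ((dist x (a p))\<^sup>2 - (r p)\<^sup>2))
          = - (\<Sum>p\<in>J. c p * inner (x - fst p) (w - snd p - x))"
        unfolding a_def r_def inner_eq_dist_midpoint by (simp add: sum_negf[symmetric] algebra_simps)
      ultimately show "(\<Sum>p\<in>J. c p * ((dist (\<Sum>q\<in>J. c q *\<^sub>R a q) (a p))\<^sup>2 - (r p)\<^sup>2)) \<le> 0"
        unfolding x_def by linarith
    qed (simp add: r_def)
  qed auto
  then obtain x where x: "\<And>p. p \<in> gra A \<Longrightarrow> x \<in> cball (a p) (r p)"
    by blast
  have "0 \<le> inner (x - y) (w - v - x)" if "v \<in> A y" for y v
    using x[of "(y, v)"] that unfolding cball_iff by (simp add: gra_def)
  then show ?thesis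
    by blast
qed (auto simp: gra_def)

lemma rho_monotone_shift:
  assumes mono: "rho_monotone \<rho> A" and "0 < 1 + \<rho>"
  shows "rho_monotone 0 (\<lambda>y. (\<lambda>v. (v - \<rho> *\<^sub>R y) /\<^sub>R (1 + \<rho>)) ` A y)"
  unfolding rho_monotone_def gra_def
proof (clarsimp)
  fix x y u v assume "u \<in> A x" "v \<in> A y"
  define \<kappa> where "\<kappa> = 1 + \<rho>"
  have "\<kappa> *\<^sub>R ((u - \<rho> *\<^sub>R x) /\<^sub>R \<kappa> - (v - \<rho> *\<^sub>R y) /\<^sub>R \<kappa>) = (u - \<rho> *\<^sub>R x) - (v - \<rho> *\<^sub>R y)"
    using \<open>0 < 1 + \<rho>\<close> unfolding \<kappa>_def[symmetric] by (simp flip: scaleR_diff_right)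
  then have "\<kappa> * inner (x - y) ((u - \<rho> *\<^sub>R x) /\<^sub>R \<kappa> - (v - \<rho> *\<^sub>R y) /\<^sub>R \<kappa>)
      = inner (x - y) ((u - \<rho> *\<^sub>R x) - (v - \<rho> *\<^sub>R y))"
    by (metis inner_scaleR_right)
  also have "\<dots> = inner (x - y) (u - v) - \<rho> * (norm (x - y))\<^sup>2"
    by (simp add: inner_simps power2_norm_eq_inner algebra_simps)
  also have "0 \<le> \<dots>"
    using rho_monotoneD[OF mono \<open>u \<in> A x\<close> \<open>v \<in> A y\<close>] by simp
  finally show "0 \<le> inner (x - y) ((u - \<rho> *\<^sub>R x) /\<^sub>R (1 + \<rho>) - (v - \<rho> *\<^sub>R y) /\<^sub>R (1 + \<rho>))"
    using \<open>0 < 1 + \<rho>\<close> unfolding \<kappa>_def by (simp add: zero_le_mult_iff)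
qed

lemma rho_monotone_minty:
  fixes A :: "'a::{real_inner,complete_space} \<Rightarrow> 'a set"
  assumes mono: "rho_monotone \<rho> A" and "0 < 1 + \<rho>"
  shows "\<exists>x. \<forall>y. \<forall>v\<in>A y. \<rho> * (norm (x - y))\<^sup>2 \<le> inner (x - y) (w - x - v)"
proof -
  define \<kappa> where "\<kappa> = 1 + \<rho>"
  obtain x where x: "\<And>y v. v \<in> A y \<Longrightarrow> 0 \<le> inner (x - y) (w /\<^sub>R \<kappa> - (v - \<rho> *\<^sub>R y) /\<^sub>R \<kappa> - x)"
    using monotone_minty[OF rho_monotone_shift[OF assms]] unfolding \<kappa>_def by blast
  have "\<rho> * (norm (x - y))\<^sup>2 \<le> inner (x - y) (w - x - v)" if "v \<in> A y" for y v
  proof -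
    have "0 \<le> \<kappa> * inner (x - y) (w /\<^sub>R \<kappa> - (v - \<rho> *\<^sub>R y) /\<^sub>R \<kappa> - x)"
      using x[OF that] \<open>0 < 1 + \<rho>\<close> unfolding \<kappa>_def by simp
    also have "\<dots> = inner (x - y) (\<kappa> *\<^sub>R (w /\<^sub>R \<kappa> - (v - \<rho> *\<^sub>R y) /\<^sub>R \<kappa> - x))"
      by simp
    also have "\<kappa> *\<^sub>R (w /\<^sub>R \<kappa> - (v - \<rho> *\<^sub>R y) /\<^sub>R \<kappa> - x) = w - (v - \<rho> *\<^sub>R y) - \<kappa> *\<^sub>R x"
      using \<open>0 < 1 + \<rho>\<close> unfolding \<kappa>_def by (simp add: scaleR_diff_right)
    also have "\<dots> = (w - x - v) - \<rho> *\<^sub>R (x - y)"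
      unfolding \<kappa>_def by (simp add: algebra_simps)
    finally show ?thesis
      by (simp add: inner_diff_right power2_norm_eq_inner)
  qed
  then show ?thesis by blast
qed

lemma resolvent_rho_firm:
  assumes "rho_monotone \<rho> A" "y\<^sub>1 \<in> resolvent A x\<^sub>1" "y\<^sub>2 \<in> resolvent A x\<^sub>2"
  shows "(1 + \<rho>) * (norm (y\<^sub>1 - y\<^sub>2))\<^sup>2 \<le> inner (y\<^sub>1 - y\<^sub>2) (x\<^sub>1 - x\<^sub>2)"
proof -
  have "\<rho> * (norm (y\<^sub>1 - y\<^sub>2))\<^sup>2 \<le> inner (y\<^sub>1 - y\<^sub>2) ((x\<^sub>1 - y\<^sub>1) - (x\<^sub>2 - y\<^sub>2))"
    using assms by (intro rho_monotoneD) (auto simp: resolvent_def)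
  then show ?thesis
    by (simp add: inner_simps power2_norm_eq_inner algebra_simps)
qed

lemma resolvent_unique:
  fixes A :: "'a::{real_inner,complete_space} \<Rightarrow> 'a set"
  assumes "max_rho_monotone \<rho> A" "0 < 1 + \<rho>"
  shows "\<exists>!y. y \<in> resolvent A x"
proof -
  have mono: "rho_monotone \<rho> A"
    using assms(1) by (simp add: max_rho_monotone_def)
  obtain y where "\<forall>z. \<forall>v\<in>A z. \<rho> * (norm (y - z))\<^sup>2 \<le> inner (y - z) ((x - y) - v)"
    using rho_monotone_minty[OF mono assms(2)] by blast
  then have "y \<in> resolvent A x"
    using assms(1) unfolding max_rho_monotone_iff resolvent_def by blast
  moreover have "y' = y" if "y' \<in> resolvent A x" for y'
  proof -
    have "(1 + \<rho>) * (norm (y' - y))\<^sup>2 \<le> 0"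
      using resolvent_rho_firm[OF mono that \<open>y \<in> resolvent A x\<close>] by simp
    then show ?thesis
      using assms(2) by (simp add: mult_le_0_iff)
  qed
  ultimately show ?thesis by blast
qed

lemma resolvent_eq_THE:
  fixes A :: "'a::{real_inner,complete_space} \<Rightarrow> 'a set"
  assumes "max_rho_monotone \<rho> A" "0 < 1 + \<rho>"
  shows "resolvent A x = {THE y. y \<in> resolvent A x}"
proof -
  obtain y where "resolvent A x = {y}"
    using resolvent_unique[OF assms, of x] by blast
  then show ?thesis
    by simp
qed

section \<open>The Douglas--Rachford operator\<close>

lemma DR_op_eq:
  assumes "\<And>x. resolvent (op_scale \<gamma> A) x = {J x}" "\<And>x. resolvent (op_scale \<gamma> B) x = {K x}"
  shows "DR_op \<gamma> A B x = {x - (J x - K (2 *\<^sub>R J x - x))}"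
proof -
  have "DR_op \<gamma> A B x = {(1/2) *\<^sub>R (x + (2 *\<^sub>R K (2 *\<^sub>R J x - x) - (2 *\<^sub>R J x - x)))}"
    unfolding DR_op_def op_comp_def reflected_resolvent_def assms by simp
  also have "(1/2) *\<^sub>R (x + (2 *\<^sub>R K (2 *\<^sub>R J x - x) - (2 *\<^sub>R J x - x))) = x - (J x - K (2 *\<^sub>R J x - x))"
    by (simp add: algebra_simps flip: scaleR_add_left)
  finally show ?thesis .
qed

lemma averaged_Id_minus:
  assumes "0 < \<alpha>" "\<alpha> < 1"
    and "\<And>x y. (norm (S x - S y))\<^sup>2 \<le> 2 * \<alpha> * inner (x - y) (S x - S y)"
  shows "averaged \<alpha> (\<lambda>x. x - S x)"
  unfolding averaged_def
proof (intro conjI exI)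
  define N where "N x = x - (1 / \<alpha>) *\<^sub>R S x" for x
  show "nonexpansive N"
    unfolding nonexpansive_def
  proof (intro allI)
    fix x y
    have "(norm (N x - N y))\<^sup>2 = (norm (x - y))\<^sup>2 - 2 * (1 / \<alpha>) * inner (x - y) (S x - S y)
        + (1 / \<alpha>)\<^sup>2 * (norm (S x - S y))\<^sup>2"
      unfolding N_def power2_norm_eq_inner
      by (simp add: inner_simps inner_commute algebra_simps power2_eq_square)
    moreover have "(1 / \<alpha>)\<^sup>2 * (norm (S x - S y))\<^sup>2 \<le> (1 / \<alpha>)\<^sup>2 * (2 * \<alpha> * inner (x - y) (S x - S y))"
      using assms(3) by (rule mult_left_mono) simp
    moreover have "(1 / \<alpha>)\<^sup>2 * (2 * \<alpha> * inner (x - y) (S x - S y)) = 2 * (1 / \<alpha>) * inner (x - y) (S x - S y)"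
      using assms(1) by (simp add: power2_eq_square)
    ultimately have "(norm (N x - N y))\<^sup>2 \<le> (norm (x - y))\<^sup>2"
      by linarith
    then show "norm (N x - N y) \<le> norm (x - y)"
      by (rule power2_le_imp_le) simp
  qed
  show "(\<lambda>x. x - S x) = (\<lambda>x. (1 - \<alpha>) *\<^sub>R x + \<alpha> *\<^sub>R N x)"
    unfolding N_def using assms(1) by (simp add: algebra_simps)
qed (use assms in auto)

lemma DR_key_inequality:
  fixes da dc dx :: "'a::real_inner"
  assumes "0 \<le> \<gamma>" "0 \<le> \<rho>\<^sub>A + \<rho>\<^sub>B"
    and A: "(1 + \<gamma> * \<rho>\<^sub>A) * (norm da)\<^sup>2 \<le> inner da dx"
    and B: "(1 + \<gamma> * \<rho>\<^sub>B) * (norm dc)\<^sup>2 \<le> inner dc (2 *\<^sub>R da - dx)"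
  shows "(\<rho>\<^sub>A + \<rho>\<^sub>B + \<gamma> * \<rho>\<^sub>A * \<rho>\<^sub>B) * (norm (da - dc))\<^sup>2 \<le> (\<rho>\<^sub>A + \<rho>\<^sub>B) * inner dx (da - dc)"
proof -
  have "(1 + \<gamma> * \<rho>\<^sub>A) * (norm da)\<^sup>2 + (1 + \<gamma> * \<rho>\<^sub>B) * (norm dc)\<^sup>2 - 2 * inner da dc \<le> inner dx (da - dc)"
    using A B by (simp add: inner_simps inner_commute)
  then have "(\<rho>\<^sub>A + \<rho>\<^sub>B) * ((1 + \<gamma> * \<rho>\<^sub>A) * (norm da)\<^sup>2 + (1 + \<gamma> * \<rho>\<^sub>B) * (norm dc)\<^sup>2 - 2 * inner da dc)
      \<le> (\<rho>\<^sub>A + \<rho>\<^sub>B) * inner dx (da - dc)"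
    using assms(2) by (rule mult_left_mono)
  moreover have "(\<rho>\<^sub>A + \<rho>\<^sub>B) * ((1 + \<gamma> * \<rho>\<^sub>A) * (norm da)\<^sup>2 + (1 + \<gamma> * \<rho>\<^sub>B) * (norm dc)\<^sup>2 - 2 * inner da dc)
      = (\<rho>\<^sub>A + \<rho>\<^sub>B + \<gamma> * \<rho>\<^sub>A * \<rho>\<^sub>B) * (norm (da - dc))\<^sup>2 + \<gamma> * (norm (\<rho>\<^sub>A *\<^sub>R da + \<rho>\<^sub>B *\<^sub>R dc))\<^sup>2"
    unfolding power2_norm_eq_inner by (simp add: inner_simps inner_commute algebra_simps)
  moreover have "0 \<le> \<gamma> * (norm (\<rho>\<^sub>A *\<^sub>R da + \<rho>\<^sub>B *\<^sub>R dc))\<^sup>2"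
    using assms(1) by simp
  ultimately show ?thesis
    by linarith
qed

lemma DR_resolvent_parameters_pos:
  fixes \<gamma> \<rho>\<^sub>A \<rho>\<^sub>B :: real
  assumes "0 < \<gamma>" "0 < \<rho>\<^sub>A + \<rho>\<^sub>B" "0 < \<rho>\<^sub>A + \<rho>\<^sub>B + 2 * \<gamma> * \<rho>\<^sub>A * \<rho>\<^sub>B"
  shows "0 < 1 + \<gamma> * \<rho>\<^sub>A" "0 < 1 + \<gamma> * \<rho>\<^sub>B"
proof -
  have "2 * ((1 + \<gamma> * \<rho>\<^sub>A) * (1 + \<gamma> * \<rho>\<^sub>B))
      = 2 + \<gamma> * (\<rho>\<^sub>A + \<rho>\<^sub>B) + \<gamma> * (\<rho>\<^sub>A + \<rho>\<^sub>B + 2 * \<gamma> * \<rho>\<^sub>A * \<rho>\<^sub>B)"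
    by (simp add: algebra_simps)
  also have "\<dots> > 0"
    using assms by (simp add: add_pos_pos)
  finally have "0 < (1 + \<gamma> * \<rho>\<^sub>A) * (1 + \<gamma> * \<rho>\<^sub>B)"
    by simp
  moreover have "0 < (1 + \<gamma> * \<rho>\<^sub>A) + (1 + \<gamma> * \<rho>\<^sub>B)"
    using assms(1,2) by (simp add: add_pos_pos flip: distrib_left)
  ultimately show "0 < 1 + \<gamma> * \<rho>\<^sub>A" "0 < 1 + \<gamma> * \<rho>\<^sub>B"
    by (auto simp: zero_less_mult_iff)
qed

lemma DR_step_cocoercive:
  fixes J K :: "'a::real_inner \<Rightarrow> 'a"
  assumes "0 \<le> \<gamma>" "0 < \<rho>\<^sub>A + \<rho>\<^sub>B" "0 < \<rho>\<^sub>A + \<rho>\<^sub>B + \<gamma> * \<rho>\<^sub>A * \<rho>\<^sub>B"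
    and J: "\<And>x y. (1 + \<gamma> * \<rho>\<^sub>A) * (norm (J x - J y))\<^sup>2 \<le> inner (J x - J y) (x - y)"
    and K: "\<And>x y. (1 + \<gamma> * \<rho>\<^sub>B) * (norm (K x - K y))\<^sup>2 \<le> inner (K x - K y) (x - y)"
  defines "S \<equiv> \<lambda>x. J x - K (2 *\<^sub>R J x - x)"
  shows "(norm (S x - S y))\<^sup>2 \<le> (\<rho>\<^sub>A + \<rho>\<^sub>B) / (\<rho>\<^sub>A + \<rho>\<^sub>B + \<gamma> * \<rho>\<^sub>A * \<rho>\<^sub>B) * inner (x - y) (S x - S y)"
proof -
  define da where "da = J x - J y"
  define dc where "dc = K (2 *\<^sub>R J x - x) - K (2 *\<^sub>R J y - y)"
  have "(1 + \<gamma> * \<rho>\<^sub>B) * (norm dc)\<^sup>2 \<le> inner dc ((2 *\<^sub>R J x - x) - (2 *\<^sub>R J y - y))"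
    unfolding dc_def by (rule K)
  also have "(2 *\<^sub>R J x - x) - (2 *\<^sub>R J y - y) = 2 *\<^sub>R da - (x - y)"
    unfolding da_def by (simp add: algebra_simps)
  finally have "(\<rho>\<^sub>A + \<rho>\<^sub>B + \<gamma> * \<rho>\<^sub>A * \<rho>\<^sub>B) * (norm (da - dc))\<^sup>2 \<le> (\<rho>\<^sub>A + \<rho>\<^sub>B) * inner (x - y) (da - dc)"
    using assms(1,2) J[of x y] unfolding da_def by (intro DR_key_inequality) auto
  moreover have "S x - S y = da - dc"
    unfolding S_def da_def dc_def by simp
  ultimately show ?thesis
    using assms(3) by (simp add: pos_le_divide_eq mult.commute)
qed

theorem DR_op_averaged:
  fixes A B :: "'a::{real_inner,complete_space} \<Rightarrow> 'a set"
  assumes mA: "max_rho_monotone \<rho>\<^sub>A A" and mB: "max_rho_monotone \<rho>\<^sub>B B" and "0 < \<gamma>"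
    and "0 < \<rho>\<^sub>A + \<rho>\<^sub>B" "0 < \<rho>\<^sub>A + \<rho>\<^sub>B + 2 * \<gamma> * \<rho>\<^sub>A * \<rho>\<^sub>B"
  shows "single_valued_full_domain (DR_op \<gamma> A B) \<and>
    averaged ((\<rho>\<^sub>A + \<rho>\<^sub>B) / (2 * (\<rho>\<^sub>A + \<rho>\<^sub>B + \<gamma> * \<rho>\<^sub>A * \<rho>\<^sub>B))) (\<lambda>x. THE y. y \<in> DR_op \<gamma> A B x)"
proof -
  define \<alpha> where "\<alpha> = (\<rho>\<^sub>A + \<rho>\<^sub>B) / (2 * (\<rho>\<^sub>A + \<rho>\<^sub>B + \<gamma> * \<rho>\<^sub>A * \<rho>\<^sub>B))"
  have K_pos: "0 < \<rho>\<^sub>A + \<rho>\<^sub>B + \<gamma> * \<rho>\<^sub>A * \<rho>\<^sub>B"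
    using assms(4,5) by linarith
  then have "0 < \<alpha>" "\<alpha> < 1"
    unfolding \<alpha>_def using assms(4,5) by (simp_all add: divide_less_eq)
  define J where "J x = (THE y. y \<in> resolvent (op_scale \<gamma> A) x)" for x
  define K where "K x = (THE y. y \<in> resolvent (op_scale \<gamma> B) x)" for x
  have mA': "max_rho_monotone (\<gamma> * \<rho>\<^sub>A) (op_scale \<gamma> A)" and mB': "max_rho_monotone (\<gamma> * \<rho>\<^sub>B) (op_scale \<gamma> B)"
    using max_rho_monotone_op_scale mA mB \<open>0 < \<gamma>\<close> by auto
  have res: "resolvent (op_scale \<gamma> A) x = {J x}" "resolvent (op_scale \<gamma> B) x = {K x}" for x
    unfolding J_def K_def
    using resolvent_eq_THE[OF mA'] resolvent_eq_THE[OF mB'] DR_resolvent_parameters_pos[OF assms(3-5)]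
    by blast+
  then have DR: "DR_op \<gamma> A B x = {x - (J x - K (2 *\<^sub>R J x - x))}" for x
    by (rule DR_op_eq)
  have firm: "(1 + \<gamma> * \<rho>\<^sub>A) * (norm (J x - J y))\<^sup>2 \<le> inner (J x - J y) (x - y)"
      "(1 + \<gamma> * \<rho>\<^sub>B) * (norm (K x - K y))\<^sup>2 \<le> inner (K x - K y) (x - y)" for x y
    using mA' mB' res unfolding max_rho_monotone_def by (auto intro: resolvent_rho_firm)
  have "2 * \<alpha> = (\<rho>\<^sub>A + \<rho>\<^sub>B) / (\<rho>\<^sub>A + \<rho>\<^sub>B + \<gamma> * \<rho>\<^sub>A * \<rho>\<^sub>B)"
    using K_pos unfolding \<alpha>_def by (simp add: field_simps)
  then have "averaged \<alpha> (\<lambda>x. x - (J x - K (2 *\<^sub>R J x - x)))"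
    using DR_step_cocoercive[OF less_imp_le[OF \<open>0 < \<gamma>\<close>] assms(4) K_pos firm]
    by (intro averaged_Id_minus[OF \<open>0 < \<alpha>\<close> \<open>\<alpha> < 1\<close>]) simp
  moreover have "(\<lambda>x. THE y. y \<in> DR_op \<gamma> A B x) = (\<lambda>x. x - (J x - K (2 *\<^sub>R J x - x)))"
    unfolding DR by simp
  ultimately show ?thesis
    unfolding single_valued_full_domain_def DR \<alpha>_def by simp
qed

theorem mainTheorem12:
  fixes A B :: "'a::{real_inner, complete_space} \<Rightarrow> 'a set"
    and \<mu> \<omega> \<gamma> \<alpha> :: real
  assumes "\<mu> > \<omega>" and "\<omega> \<ge> 0"
    and "\<gamma> > 0" and "\<omega> = 0 \<or> \<gamma> < (\<mu> - \<omega>) / (2 * \<mu> * \<omega>)"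
    and "(max_rho_monotone (-\<omega>) A \<and> max_rho_monotone \<mu> B) \<or>
         (max_rho_monotone \<mu> A \<and> max_rho_monotone (-\<omega>) B)"
    and "\<alpha> = (\<mu> - \<omega>) / (2 * (\<mu> - \<omega> - \<gamma> * \<mu> * \<omega>))"
  shows "single_valued_full_domain (DR_op \<gamma> A B) \<and> 0 < \<alpha> \<and> \<alpha> < 1 \<and>
         averaged \<alpha> (\<lambda>x. THE y. y \<in> DR_op \<gamma> A B x)"
proof -
  obtain \<rho>\<^sub>A \<rho>\<^sub>B where "max_rho_monotone \<rho>\<^sub>A A" "max_rho_monotone \<rho>\<^sub>B B"
    and sum: "\<rho>\<^sub>A + \<rho>\<^sub>B = \<mu> - \<omega>" and prod: "\<rho>\<^sub>A * \<rho>\<^sub>B = - (\<mu> * \<omega>)"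
    using assms(5) by (elim disjE conjE) (auto intro: that[of "-\<omega>" \<mu>] that[of \<mu> "-\<omega>"])
  have "0 < \<mu> - \<omega> - 2 * \<gamma> * \<mu> * \<omega>"
  proof (cases "\<omega> = 0")
    case False
    then have "\<gamma> * (2 * \<mu> * \<omega>) < \<mu> - \<omega>"
      using assms(1,2,4) by (simp add: less_divide_eq)
    then show ?thesis
      by (simp add: algebra_simps)
  qed (use assms(1) in simp)
  then have "0 < \<rho>\<^sub>A + \<rho>\<^sub>B + 2 * \<gamma> * \<rho>\<^sub>A * \<rho>\<^sub>B"
    using sum prod by (simp add: mult.assoc)
  moreover have "\<alpha> = (\<rho>\<^sub>A + \<rho>\<^sub>B) / (2 * (\<rho>\<^sub>A + \<rho>\<^sub>B + \<gamma> * \<rho>\<^sub>A * \<rho>\<^sub>B))"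
    using assms(6) sum prod by (simp add: mult.assoc)
  ultimately show ?thesis
    using DR_op_averaged[OF \<open>max_rho_monotone \<rho>\<^sub>A A\<close> \<open>max_rho_monotone \<rho>\<^sub>B B\<close> assms(3)] sum assms(1)
    unfolding averaged_def by auto
qed

end
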